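(* The SSL scheme $(\mathsf{Setup},\mathsf{Gen},\mathsf{Lessor},\mathsf{Run},\mathsf{Check})$ described in the context satisfies $\varepsilon$-correctness with $\varepsilon=\mathrm{negl}(\lambda)$.
   Context: Correctness: for all $C\in\mathcal{C}_\lambda$ with input length $n$, over $\mathsf{crs}\leftarrow\mathsf{Setup}(1^\lambda)$, $\mathsf{sk}\leftarrow\mathsf{Gen}(\mathsf{crs})$, $\rho_C\leftarrow\mathsf{Lessor}(\mathsf{sk},C)$: $\Pr[\forall x\in\{0,1\}^n: y=C(x)$ where $(\rho',y)\leftarrow\mathsf{Run}(\mathsf{crs},\rho_C,x)]\ge1-\varepsilon$ and $\Pr[\mathsf{Check}(\mathsf{sk},\rho_C)=1]\ge1-\varepsilon$. Ingredients: $\mathcal{C}=\{\mathcal{C}_\lambda\}$ is a class of $\mathcal{S}$-searchable circuits (a PPT $\mathcal{S}$ outputs, on $C$, an $x$ with $C(x)=1$) with distribution $\mathcal{D}_{\mathcal{C}}$; $\mathsf{qIHO}=(\mathsf{Obf},\mathsf{Eval})$ is a perfectly correct q-input-hiding obfuscator for $\mathcal{C}$; $\mathsf{shO}$ is a subspace hiding obfuscator over $\mathbb{Z}_q$ (its obfuscation of a subspace $A$ computes the indicator $\mathbb{1}_A$ on all inputs except with negligible probability); $(\mathsf{CRSGen},\mathcal{P},\mathcal{V})$ is a (sub-exponentially secure) q-simulation-extractable NIZK for NP with perfect completeness. For a subspace $A\subseteq\mathbb{Z}_q^\lambda$, $|A\rangle=|A|^{-1/2}\sum_{a\in A}|a\rangle$,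 $A^\perp$ is its dual, and $\mathsf{FT}$ is the quantum Fourier transform over $\mathbb{Z}_q^\lambda$ (so $\mathsf{FT}|A\rangle=|A^\perp\rangle$). Scheme: $\mathsf{Setup}(1^\lambda)$: output $\mathsf{crs}\leftarrow\mathsf{CRSGen}(1^{\lambda+n})$. $\mathsf{Gen}(\mathsf{crs})$: choose a uniformly random $\lambda/2$-dimensional subspace $A\subset\mathbb{Z}_q^\lambda$; $\mathsf{sk}=A$. $\mathsf{Lessor}(A,C)$: prepare $|A\rangle$; $\widetilde{C}\leftarrow\mathsf{qIHO}.\mathsf{Obf}(C;r_o)$; $\widetilde{g}\leftarrow\mathsf{shO}(A;r_A)$; $\widetilde{g_\perp}\leftarrow\mathsf{shO}(A^\perp;r_{A^\perp})$; $x=\mathcal{S}(C)$; $\pi\leftarrow\mathcal{P}(\mathsf{crs},(\widetilde{g},\widetilde{g_\perp},\widetilde{C}),(A,r_o,r_A,r_{A^\perp},C,x))$ for the NP relation: $\widetilde{g}=\mathsf{shO}(A;r_A)$, $\widetilde{g_\perp}=\mathsf{shO}(A^\perp;r_{A^\perp})$, $\widetilde{C}=\mathsf{qIHO}.\mathsf{Obf}(C;r_o)$, $C(x)=1$; output $(|A\rangle\langle A|,\widetilde{g},\widetilde{g_\perp},\widetilde{C},\pi)$. $\mathsf{Run}(\mathsf{crs},(\rho,\widetilde{g},\widetilde{g_\perp},\widetilde{C},\pi),x)$: measure the classical registers; apply $|v\rangle|y\rangle\mapsto|v\rangle|y\oplus\widetilde{g}(v)\rangle$ to $\rho\otimes|0\rangle\langle0|$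 and measure the last bit, getting $a$; apply $\mathsf{FT}$ to the post-measurement state, apply $|v\rangle|y\rangle\mapsto|v\rangle|y\oplus\widetilde{g_\perp}(v)\rangle$ with a fresh ancilla and measure, getting $b$; apply $\mathsf{FT}$ again to get $\rho''$; compute $c\leftarrow\mathcal{V}(\mathsf{crs},(\widetilde{g},\widetilde{g_\perp},\widetilde{C}),\pi)$; if $a=0$ or $b=0$ or $c=0$ output $\bot$; otherwise output $(\rho'',\widetilde{g},\widetilde{g_\perp},\widetilde{C},\pi)$ and $y=\mathsf{qIHO}.\mathsf{Eval}(\widetilde{C},x)$. $\mathsf{Check}(A,(\rho,\dots))$: measure $\{|A\rangle\langle A|,I-|A\rangle\langle A|\}$ on $\rho$ and output $1$ iff the outcome is $|A\rangle\langle A|$. *)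

theory Defs
  imports "HOL-Probability.Probability" "HOL-Computational_Algebra.Primes"
begin

definition negligible :: "(nat \<Rightarrow> real) \<Rightarrow> bool" where
  "negligible f \<longleftrightarrow> (\<forall>c::nat. \<forall>\<^sub>F l in sequentially. \<bar>f l\<bar> \<le> inverse (real l ^ c))"

definition zqvecs :: "nat \<Rightarrow> nat \<Rightarrow> nat list set" where
  "zqvecs q l = {v. length v = l \<and> set v \<subseteq> {..<q}}"

definition zq_add :: "nat \<Rightarrow> nat list \<Rightarrow> nat list \<Rightarrow> nat list" where
  "zq_add q u v = map2 (\<lambda>a b. (a + b) mod q) u v"

definition zq_smul :: "nat \<Rightarrow> nat \<Rightarrow> nat list \<Rightarrow> nat list" where
  "zq_smul q c v = map (\<lambda>a. (c * a) mod q) v"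

definition zq_dot :: "nat list \<Rightarrow> nat list \<Rightarrow> nat" where
  "zq_dot u v = sum_list (map2 (*) u v)"

definition is_subspace :: "nat \<Rightarrow> nat \<Rightarrow> nat list set \<Rightarrow> bool" where
  "is_subspace q l A \<longleftrightarrow> A \<subseteq> zqvecs q l \<and> replicate l 0 \<in> A \<and>
     (\<forall>u\<in>A. \<forall>v\<in>A. zq_add q u v \<in> A) \<and> (\<forall>c<q. \<forall>v\<in>A. zq_smul q c v \<in> A)"

(* a subspace of Z_q^l (q prime) has dimension d iff it has q^d elements *)
definition subspaces_dim :: "nat \<Rightarrow> nat \<Rightarrow> nat \<Rightarrow> nat list set set" where
  "subspaces_dim q l d = {A. is_subspace q l A \<and> card A = q ^ d}"

definition zq_dual :: "nat \<Rightarrow> nat \<Rightarrow> nat list set \<Rightarrow> nat list set" where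
  "zq_dual q l A = {u \<in> zqvecs q l. \<forall>a\<in>A. zq_dot u a mod q = 0}"

(* ---------- pure quantum states on C^(Z_q^l): amplitude functions ---------- *)

type_synonym qstate = "nat list \<Rightarrow> complex"

definition subspace_state :: "nat list set \<Rightarrow> qstate" where
  "subspace_state A = (\<lambda>v. if v \<in> A then complex_of_real (1 / sqrt (real (card A))) else 0)"

definition qft :: "nat \<Rightarrow> nat \<Rightarrow> qstate \<Rightarrow> qstate" where
  "qft q l \<psi> = (\<lambda>u. if u \<in> zqvecs q l then
      complex_of_real (1 / sqrt (real q ^ l)) *
        (\<Sum>v\<in>zqvecs q l. cis (2 * pi / real q) ^ zq_dot u v * \<psi> v)
    else 0)"

definition sqnorm :: "nat \<Rightarrow> nat \<Rightarrow> qstate \<Rightarrow> real" where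
  "sqnorm q l \<psi> = (\<Sum>v\<in>zqvecs q l. (cmod (\<psi> v))\<^sup>2)"

definition proj_ind :: "(nat list \<Rightarrow> bool) \<Rightarrow> qstate \<Rightarrow> qstate" where
  "proj_ind f \<psi> = (\<lambda>v. if f v then \<psi> v else 0)"

definition normalize_state :: "nat \<Rightarrow> nat \<Rightarrow> qstate \<Rightarrow> qstate" where
  "normalize_state q l \<psi> = (if sqnorm q l \<psi> = 0 then \<psi>
      else (\<lambda>v. \<psi> v / complex_of_real (sqrt (sqnorm q l \<psi>))))"

(* Computing |v>|y> -> |v>|y xor f(v)> into a fresh ancilla and measuring the ancilla
   = projective measurement {P_f, I - P_f}; returns (outcome, post-measurement state). *)
definition measure_ind :: "nat \<Rightarrow> nat \<Rightarrow> (nat list \<Rightarrow> bool) \<Rightarrow> qstate \<Rightarrow> (bool \<times> qstate) pmf" where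
  "measure_ind q l f \<psi> =
     map_pmf (\<lambda>b. (b, normalize_state q l (proj_ind (if b then f else (\<lambda>v. \<not> f v)) \<psi>)))
       (bernoulli_pmf (sqnorm q l (proj_ind f \<psi>)))"

(* NP relation of the NIZK:  statement (g, g_perp, C~), witness (A, r_o, r_A, r_Aperp, C, x) *)
definition ssl_rel ::
  "(nat \<Rightarrow> nat) \<Rightarrow> (nat \<Rightarrow> nat list set \<Rightarrow> 'rs \<Rightarrow> 'p) \<Rightarrow> (nat \<Rightarrow> 'c \<Rightarrow> 'ro \<Rightarrow> 'o) \<Rightarrow>
   ('c \<Rightarrow> bool list \<Rightarrow> bool) \<Rightarrow> nat \<Rightarrow> ('p \<times> 'p \<times> 'o) \<Rightarrow>
   (nat list set \<times> 'ro \<times> 'rs \<times> 'rs \<times> 'c \<times> bool list) \<Rightarrow> bool" where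
  "ssl_rel q shO Obf circ l st w =
     (case st of (g, gp, Ct) \<Rightarrow> case w of (A, ro, rA, rAp, C, x) \<Rightarrow>
        g = shO l A rA \<and> gp = shO l (zq_dual (q l) l A) rAp \<and> Ct = Obf l C ro \<and> circ C x)"

definition ssl_gen :: "(nat \<Rightarrow> nat) \<Rightarrow> nat \<Rightarrow> 'crs \<Rightarrow> nat list set pmf" where
  "ssl_gen q l crs = pmf_of_set (subspaces_dim (q l) l (l div 2))"

definition ssl_lessor ::
  "(nat \<Rightarrow> nat) \<Rightarrow> (nat \<Rightarrow> nat list set \<Rightarrow> 'rs \<Rightarrow> 'p) \<Rightarrow> (nat \<Rightarrow> 'rs pmf) \<Rightarrow>
   (nat \<Rightarrow> 'c \<Rightarrow> 'ro \<Rightarrow> 'o) \<Rightarrow> (nat \<Rightarrow> 'ro pmf) \<Rightarrow> ('c \<Rightarrow> bool list pmf) \<Rightarrow>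
   ('crs \<Rightarrow> ('p \<times> 'p \<times> 'o) \<Rightarrow> (nat list set \<times> 'ro \<times> 'rs \<times> 'rs \<times> 'c \<times> bool list) \<Rightarrow> 'pf pmf) \<Rightarrow>
   nat \<Rightarrow> 'crs \<Rightarrow> nat list set \<Rightarrow> 'c \<Rightarrow> (qstate \<times> 'p \<times> 'p \<times> 'o \<times> 'pf) pmf" where
  "ssl_lessor q shO rs_dist Obf ro_dist S Prov l crs A C = do {
     ro \<leftarrow> ro_dist l;
     rA \<leftarrow> rs_dist l;
     rAp \<leftarrow> rs_dist l;
     x \<leftarrow> S C;
     \<pi> \<leftarrow> Prov crs (shO l A rA, shO l (zq_dual (q l) l A) rAp, Obf l C ro) (A, ro, rA, rAp, C, x);
     return_pmf (subspace_state A, shO l A rA, shO l (zq_dual (q l) l A) rAp, Obf l C ro, \<pi>)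
   }"

(* Run: None stands for output \<bottom>; otherwise Some (new lease, y) *)
definition ssl_run ::
  "(nat \<Rightarrow> nat) \<Rightarrow> ('p \<Rightarrow> nat list \<Rightarrow> bool) \<Rightarrow> ('o \<Rightarrow> bool list \<Rightarrow> bool) \<Rightarrow>
   ('crs \<Rightarrow> ('p \<times> 'p \<times> 'o) \<Rightarrow> 'pf \<Rightarrow> bool) \<Rightarrow> nat \<Rightarrow> 'crs \<Rightarrow>
   (qstate \<times> 'p \<times> 'p \<times> 'o \<times> 'pf) \<Rightarrow> bool list \<Rightarrow>
   ((qstate \<times> 'p \<times> 'p \<times> 'o \<times> 'pf) \<times> bool) option pmf" where
  "ssl_run q evalP Eval Ver l crs lease x =
     (case lease of (\<psi>, g, gp, Ct, \<pi>) \<Rightarrow> do {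
        m1 \<leftarrow> measure_ind (q l) l (evalP g) \<psi>;
        m2 \<leftarrow> measure_ind (q l) l (evalP gp) (qft (q l) l (snd m1));
        return_pmf (if fst m1 \<and> fst m2 \<and> Ver crs (g, gp, Ct) \<pi>
                    then Some ((qft (q l) l (snd m2), g, gp, Ct, \<pi>), Eval Ct x)
                    else None)
      })"

(* Check: measure {|A><A|, I - |A><A|} *)
definition ssl_check :: "(nat \<Rightarrow> nat) \<Rightarrow> nat \<Rightarrow> nat list set \<Rightarrow>
   (qstate \<times> 'p \<times> 'p \<times> 'o \<times> 'pf) \<Rightarrow> bool pmf" where
  "ssl_check q l A lease = (case lease of (\<psi>, _) \<Rightarrow>
     bernoulli_pmf ((cmod (\<Sum>v\<in>zqvecs (q l) l. cnj (subspace_state A v) * \<psi> v))\<^sup>2))"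

(* crs <- Setup(1^l) = CRSGen(1^(l+n));  sk <- Gen(crs);  rho_C <- Lessor(sk, C) *)
definition ssl_exp ::
  "(nat \<Rightarrow> nat) \<Rightarrow> (nat \<Rightarrow> nat) \<Rightarrow> (nat \<Rightarrow> 'crs pmf) \<Rightarrow>
   (nat \<Rightarrow> nat list set \<Rightarrow> 'rs \<Rightarrow> 'p) \<Rightarrow> (nat \<Rightarrow> 'rs pmf) \<Rightarrow>
   (nat \<Rightarrow> 'c \<Rightarrow> 'ro \<Rightarrow> 'o) \<Rightarrow> (nat \<Rightarrow> 'ro pmf) \<Rightarrow> ('c \<Rightarrow> bool list pmf) \<Rightarrow>
   ('crs \<Rightarrow> ('p \<times> 'p \<times> 'o) \<Rightarrow> (nat list set \<times> 'ro \<times> 'rs \<times> 'rs \<times> 'c \<times> bool list) \<Rightarrow> 'pf pmf) \<Rightarrow>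
   nat \<Rightarrow> 'c \<Rightarrow> ('crs \<times> nat list set \<times> (qstate \<times> 'p \<times> 'p \<times> 'o \<times> 'pf)) pmf" where
  "ssl_exp q n CRSGen shO rs_dist Obf ro_dist S Prov l C = do {
     crs \<leftarrow> CRSGen (l + n l);
     A \<leftarrow> ssl_gen q l crs;
     lease \<leftarrow> ssl_lessor q shO rs_dist Obf ro_dist S Prov l crs A C;
     return_pmf (crs, A, lease)
   }"

end

theory Submission
  imports Defs
begin

text \<open>
  An honest lease consists of \<open>|A\<rangle>\<close> and obfuscations of the indicators of \<open>A\<close> and \<open>A\<^sup>\<bottom>\<close>.
  Whenever both obfuscations are correct on all of \<open>\<int>\<^sub>q\<^sup>\<lambda>\<close>, each of which fails with probability
  at most \<open>\<mu>(\<lambda>)\<close>, Run succeeds with certainty: \<open>|A\<rangle>\<close> lies in the range of the projector onto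
  \<open>A\<close>, and its Fourier transform is supported on \<open>A\<^sup>\<bottom>\<close> (a nontrivial character sums to zero
  over \<open>A\<close>) and is still a unit vector by Plancherel, so both measurements return 1; perfect
  completeness of the NIZK and perfect correctness of the obfuscator then give the output
  \<open>C(x)\<close>. Thus Run fails with probability at most \<open>2\<mu>(\<lambda>)\<close>, which is negligible, while Check
  measures \<open>|A\<rangle>\<close> against itself and always accepts.
\<close>

section \<open>Vectors over \<open>\<int>\<^sub>q\<close>\<close>

lemma zq_dot_Cons [simp]: "zq_dot (x # u) (y # v) = x * y + zq_dot u v"
  by (simp add: zq_dot_def)

lemma zq_dot_Nil [simp]: "zq_dot [] v = 0" "zq_dot u [] = 0"
  by (auto simp: zq_dot_def)

lemma zq_add_Cons [simp]: "zq_add q (x # u) (y # v) = ((x + y) mod q) # zq_add q u v"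
  by (simp add: zq_add_def)

lemma zq_add_Nil [simp]: "zq_add q [] v = []" "zq_add q u [] = []"
  by (auto simp: zq_add_def)

lemma zq_smul_Cons [simp]: "zq_smul q c (x # u) = ((c * x) mod q) # zq_smul q c u"
  by (simp add: zq_smul_def)

lemma zq_smul_Nil [simp]: "zq_smul q c [] = []"
  by (simp add: zq_smul_def)

lemma zq_dot_commute: "zq_dot u v = zq_dot v u"
proof (induction u arbitrary: v)
  case (Cons x u)
  then show ?case by (cases v) auto
qed simp

lemma zq_dot_replicate_0: "zq_dot (replicate k 0) v = 0"
proof (induction k arbitrary: v)
  case (Suc k)
  then show ?case by (cases v) auto
qed simp

lemma zq_dot_zq_add_mod:
  "length u = length w \<Longrightarrow> zq_dot (zq_add q u w) v mod q = (zq_dot u v + zq_dot w v) mod q"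
proof (induction u arbitrary: w v)
  case (Cons x u)
  then obtain y w' where w: "w = y # w'" by (cases w) auto
  show ?case
  proof (cases v)
    case (Cons b v')
    have IH: "zq_dot (zq_add q u w') v' mod q = (zq_dot u v' + zq_dot w' v') mod q"
      using Cons.IH Cons.prems w by simp
    have "zq_dot (zq_add q (x # u) w) v mod q = ((x + y) mod q * b + zq_dot (zq_add q u w') v') mod q"
      using w Cons by simp
    also have "\<dots> = ((x + y) * b + (zq_dot u v' + zq_dot w' v')) mod q"
      using IH by (metis mod_add_cong mod_mult_left_eq)
    also have "\<dots> = (zq_dot (x # u) v + zq_dot w v) mod q"
      using w Cons by (simp add: algebra_simps)
    finally show ?thesis .
  qed (simp add: w)
qed simp

lemma zq_dot_zq_smul_mod: "zq_dot (zq_smul q c u) v mod q = (c * zq_dot u v) mod q"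
proof (induction u arbitrary: v)
  case (Cons x u)
  show ?case
  proof (cases v)
    case (Cons b v')
    have "zq_dot (zq_smul q c (x # u)) v mod q = ((c * x) mod q * b + zq_dot (zq_smul q c u) v') mod q"
      using Cons by simp
    also have "\<dots> = ((c * x) * b + c * zq_dot u v') mod q"
      using Cons.IH by (metis mod_add_cong mod_mult_left_eq)
    also have "\<dots> = (c * zq_dot (x # u) v) mod q"
      using Cons by (simp add: algebra_simps)
    finally show ?thesis .
  qed simp
qed simp

lemma zq_add_in_zqvecs: "0 < q \<Longrightarrow> u \<in> zqvecs q l \<Longrightarrow> v \<in> zqvecs q l \<Longrightarrow> zq_add q u v \<in> zqvecs q l"
  by (auto simp: zqvecs_def zq_add_def set_zip)

lemma zq_smul_in_zqvecs: "0 < q \<Longrightarrow> v \<in> zqvecs q l \<Longrightarrow> zq_smul q c v \<in> zqvecs q l"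
  by (auto simp: zqvecs_def zq_smul_def)

lemma replicate_0_in_zqvecs: "0 < q \<Longrightarrow> replicate l 0 \<in> zqvecs q l"
  by (auto simp: zqvecs_def)

lemma mod_add_right_cancel_less:
  fixes x y b q :: nat
  assumes "(x + b) mod q = (y + b) mod q" "x < q" "y < q"
  shows "x = y"
proof (rule ccontr)
  assume "x \<noteq> y"
  have "(int x + int b) mod int q = (int y + int b) mod int q"
    using arg_cong[OF assms(1), of int] by (simp only: of_nat_mod of_nat_add)
  then have "int q dvd (int x + int b) - (int y + int b)"
    by (simp only: mod_eq_dvd_iff)
  then have "\<bar>int q\<bar> \<le> \<bar>int x - int y\<bar>"
    using \<open>x \<noteq> y\<close> by (intro dvd_imp_le_int) simp_all
  then show False
    using assms(2,3) by linarith
qed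

lemma zq_add_right_cancel:
  assumes "v \<in> zqvecs q l" "w \<in> zqvecs q l" "length a = l" "zq_add q v a = zq_add q w a"
  shows "v = w"
  using assms
proof (induction v arbitrary: w a l)
  case (Cons x v)
  then obtain y w' b a' l' where w: "w = y # w'" and a: "a = b # a'" and l: "l = Suc l'"
    by (cases w; cases a) (auto simp: zqvecs_def)
  have heads: "(x + b) mod q = (y + b) mod q" and tails: "zq_add q v a' = zq_add q w' a'"
    using Cons.prems(4) by (simp_all add: w a)
  have "x < q" "y < q" "v \<in> zqvecs q l'" "w' \<in> zqvecs q l'"
    using Cons.prems(1,2) by (auto simp: zqvecs_def w l)
  moreover have "length a' = l'"
    using Cons.prems(3) by (simp add: a l)
  ultimately have "x = y" "v = w'"
    using mod_add_right_cancel_less[OF heads] Cons.IH[OF _ _ _ tails] by blast+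
  then show ?case
    by (simp add: w)
qed (simp add: zqvecs_def)

lemma zqvecs_0: "zqvecs q 0 = {[]}"
  by (auto simp: zqvecs_def)

lemma zqvecs_Suc: "zqvecs q (Suc l) = (\<lambda>(a, u). a # u) ` ({..<q} \<times> zqvecs q l)"
  by (auto simp: zqvecs_def length_Suc_conv image_iff)

lemma zqvecs_eq_lists: "zqvecs q l = {xs. set xs \<subseteq> {..<q} \<and> length xs = l}"
  by (auto simp: zqvecs_def)

lemma finite_zqvecs: "finite (zqvecs q l)"
  unfolding zqvecs_eq_lists by (rule finite_lists_length_eq) simp

lemma card_zqvecs: "card (zqvecs q l) = q ^ l"
  unfolding zqvecs_eq_lists by (simp add: card_lists_length_eq)

lemma subspace_subset_zqvecs: "is_subspace q l A \<Longrightarrow> A \<subseteq> zqvecs q l"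
  by (simp add: is_subspace_def)

lemma finite_subspace: "is_subspace q l A \<Longrightarrow> finite A"
  using finite_subset[OF subspace_subset_zqvecs finite_zqvecs] .

lemma card_subspace_pos:
  assumes "is_subspace q l A"
  shows "0 < card A"
proof -
  have "replicate l 0 \<in> A"
    using assms by (simp add: is_subspace_def)
  then show ?thesis
    using finite_subspace[OF assms] card_gt_0_iff by blast
qed

lemma is_subspace_zq_dual:
  assumes "0 < q"
  shows "is_subspace q l (zq_dual q l A)"
  unfolding is_subspace_def
proof (intro conjI ballI allI impI)
  show "zq_dual q l A \<subseteq> zqvecs q l"
    by (auto simp: zq_dual_def)
  show "replicate l 0 \<in> zq_dual q l A"
    using assms by (simp add: zq_dual_def zq_dot_replicate_0 replicate_0_in_zqvecs)
next
  fix u v assume u: "u \<in> zq_dual q l A" and v: "v \<in> zq_dual q l A"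
  then have "length u = length v"
    by (auto simp: zq_dual_def zqvecs_def)
  then show "zq_add q u v \<in> zq_dual q l A"
    using u v assms by (auto simp: zq_dual_def zq_dot_zq_add_mod zq_add_in_zqvecs mod_add_eq[symmetric])
next
  fix c v assume "v \<in> zq_dual q l A"
  then show "zq_smul q c v \<in> zq_dual q l A"
    using assms by (auto simp: zq_dual_def zq_dot_zq_smul_mod zq_smul_in_zqvecs mod_mult_right_eq[symmetric])
qed

lemma ex_subspace_card:
  assumes q: "0 < q" and d: "d \<le> l"
  shows "\<exists>A. is_subspace q l A \<and> card A = q ^ d"
proof -
  define pad where "pad v = v @ replicate (l - d) (0::nat)" for v
  define W where "W = pad ` zqvecs q d"
  have zq_add_pad: "zq_add q (pad u) (pad v) = pad (zq_add q u v)" if "u \<in> zqvecs q d" "v \<in> zqvecs q d" for u v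
  proof -
    have "zq_add q (replicate k 0) (replicate k 0) = replicate k 0" for k
      by (induction k) auto
    then show ?thesis
      using that by (simp add: pad_def zq_add_def zqvecs_def)
  qed
  have zq_smul_pad: "zq_smul q c (pad v) = pad (zq_smul q c v)" for c v
    by (simp add: pad_def zq_smul_def)
  have "is_subspace q l W"
    unfolding is_subspace_def
  proof (intro conjI ballI allI impI)
    show "W \<subseteq> zqvecs q l"
      using d q by (auto simp: W_def pad_def zqvecs_def)
    have "replicate l 0 = pad (replicate d 0)"
      using d by (simp add: pad_def replicate_add[symmetric])
    then show "replicate l 0 \<in> W"
      using q by (auto simp: W_def replicate_0_in_zqvecs)
  next
    fix u v assume "u \<in> W" "v \<in> W"
    then show "zq_add q u v \<in> W"
      using q by (auto simp: W_def zq_add_pad zq_add_in_zqvecs)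
  next
    fix c v assume "v \<in> W"
    then show "zq_smul q c v \<in> W"
      using q by (auto simp: W_def zq_smul_pad zq_smul_in_zqvecs)
  qed
  moreover have "inj_on pad (zqvecs q d)"
    by (auto simp: inj_on_def pad_def)
  then have "card W = q ^ d"
    by (simp add: W_def card_image card_zqvecs)
  ultimately show ?thesis by blast
qed

section \<open>Characters and the Fourier transform\<close>

abbreviation zq_omega :: "nat \<Rightarrow> complex" where
  "zq_omega q \<equiv> cis (2 * pi / real q)"

lemma zq_omega_pow: "zq_omega q ^ k = cis (2 * pi * real k / real q)"
  by (simp add: Complex.DeMoivre mult.commute)

lemma zq_omega_pow_eq_iff:
  assumes "0 < q"
  shows "zq_omega q ^ j = zq_omega q ^ k \<longleftrightarrow> j mod q = k mod q"
proof -
  have "zq_omega q ^ k = exp (2 * of_real pi * \<i> * of_nat k / of_nat q)" for k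
    unfolding zq_omega_pow by (simp add: cis_conv_exp field_simps)
  then show ?thesis
    using complex_root_unity_eq[of q j k] assms by simp
qed

lemma zq_omega_pow_eq_1_iff: "0 < q \<Longrightarrow> zq_omega q ^ k = 1 \<longleftrightarrow> q dvd k"
  using zq_omega_pow_eq_iff[of q k 0] by (simp add: dvd_eq_mod_eq_0)

lemma zq_omega_pow_mod: "0 < q \<Longrightarrow> zq_omega q ^ (k mod q) = zq_omega q ^ k"
  by (simp add: zq_omega_pow_eq_iff)

lemma cnj_mult_zq_omega_pow: "cnj (zq_omega q ^ k) * zq_omega q ^ k = 1"
  by (simp add: zq_omega_pow cis_cnj cis_mult)

lemma mult_cnj_eq_1_iff:
  fixes a p :: complex
  assumes "cnj p * p = 1"
  shows "a * cnj p = 1 \<longleftrightarrow> a = p"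
proof
  assume "a * cnj p = 1"
  have "a = a * (cnj p * p)"
    by (simp add: assms)
  also have "\<dots> = p"
    by (simp only: mult.assoc[symmetric] \<open>a * cnj p = 1\<close> mult_1_left)
  finally show "a = p" .
next
  assume "a = p"
  then show "a * cnj p = 1"
    using assms by (simp add: mult.commute)
qed

lemma sum_zq_omega_orthogonal:
  assumes "b < q" "c < q"
  shows "(\<Sum>a<q. zq_omega q ^ (a * b) * cnj (zq_omega q ^ (a * c))) = (if b = c then of_nat q else 0)"
proof -
  have q: "0 < q"
    using assms by simp
  define z where "z = zq_omega q ^ b * cnj (zq_omega q ^ c)"
  have terms: "zq_omega q ^ (a * b) * cnj (zq_omega q ^ (a * c)) = z ^ a" for a
    by (simp add: z_def power_mult_distrib mult.commute[of a] power_mult)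
  have "z ^ q = (zq_omega q ^ q) ^ b * cnj ((zq_omega q ^ q) ^ c)"
    unfolding z_def power_mult_distrib complex_cnj_power power_mult[symmetric]
    by (simp add: mult.commute)
  also have "zq_omega q ^ q = 1"
    using zq_omega_pow_eq_1_iff[OF q] by simp
  finally have "z ^ q = 1"
    by simp
  moreover have "z = 1 \<longleftrightarrow> b = c"
    unfolding z_def mult_cnj_eq_1_iff[OF cnj_mult_zq_omega_pow]
    using zq_omega_pow_eq_iff[OF q] assms by simp
  ultimately show ?thesis
    unfolding terms sum_gp_strict by auto
qed

lemma sum_zqvecs_orthogonal:
  assumes "v \<in> zqvecs q l" "w \<in> zqvecs q l"
  shows "(\<Sum>u\<in>zqvecs q l. zq_omega q ^ zq_dot u v * cnj (zq_omega q ^ zq_dot u w))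
     = (if v = w then of_nat q ^ l else 0)"
  using assms
proof (induction l arbitrary: v w)
  case 0
  then show ?case by (simp add: zqvecs_0)
next
  case (Suc l)
  let ?\<omega> = "zq_omega q"
  obtain b v' where v: "v = b # v'" "b < q" "v' \<in> zqvecs q l"
    using Suc.prems(1) by (auto simp: zqvecs_Suc)
  obtain c w' where w: "w = c # w'" "c < q" "w' \<in> zqvecs q l"
    using Suc.prems(2) by (auto simp: zqvecs_Suc)
  have inj: "inj_on (\<lambda>(a, u). a # u) ({..<q} \<times> zqvecs q l)"
    by (auto simp: inj_on_def)
  have "(\<Sum>u\<in>zqvecs q (Suc l). ?\<omega> ^ zq_dot u v * cnj (?\<omega> ^ zq_dot u w))
      = (\<Sum>(a, u)\<in>{..<q} \<times> zqvecs q l. ?\<omega> ^ zq_dot (a # u) v * cnj (?\<omega> ^ zq_dot (a # u) w))"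
    unfolding zqvecs_Suc by (subst sum.reindex[OF inj]) (simp add: case_prod_unfold)
  also have "\<dots> = (\<Sum>a<q. \<Sum>u\<in>zqvecs q l.
      (?\<omega> ^ (a * b) * cnj (?\<omega> ^ (a * c))) * (?\<omega> ^ zq_dot u v' * cnj (?\<omega> ^ zq_dot u w')))"
    unfolding sum.cartesian_product[symmetric] using v w
    by (intro sum.cong refl) (simp add: power_add algebra_simps)
  also have "\<dots> = (\<Sum>a<q. ?\<omega> ^ (a * b) * cnj (?\<omega> ^ (a * c)))
      * (\<Sum>u\<in>zqvecs q l. ?\<omega> ^ zq_dot u v' * cnj (?\<omega> ^ zq_dot u w'))"
    by (simp add: sum_product)
  also have "\<dots> = (if v = w then of_nat q ^ Suc l else 0)"
    using sum_zq_omega_orthogonal[OF v(2) w(2)] Suc.IH[OF v(3) w(3)] v(1) w(1) by auto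
  finally show ?case .
qed

lemma qft_mult_cnj_qft:
  assumes "u \<in> zqvecs q l"
  shows "qft q l \<psi> u * cnj (qft q l \<phi> u) = of_real (1 / real q ^ l) * (\<Sum>v\<in>zqvecs q l. \<Sum>w\<in>zqvecs q l.
      (\<psi> v * cnj (\<phi> w)) * (zq_omega q ^ zq_dot u v * cnj (zq_omega q ^ zq_dot u w)))"
proof -
  have "of_real (1 / sqrt (real q ^ l)) * cnj (of_real (1 / sqrt (real q ^ l))) = (of_real (1 / real q ^ l) :: complex)"
    by (simp flip: of_real_mult)
  then show ?thesis
    using assms by (simp add: qft_def cnj_sum sum_product algebra_simps)
qed

theorem qft_plancherel:
  assumes q: "0 < q"
  shows "(\<Sum>u\<in>zqvecs q l. qft q l \<psi> u * cnj (qft q l \<phi> u)) = (\<Sum>v\<in>zqvecs q l. \<psi> v * cnj (\<phi> v))"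
proof -
  let ?Z = "zqvecs q l" and ?\<omega> = "zq_omega q"
  define F where "F u v w = (\<psi> v * cnj (\<phi> w)) * (?\<omega> ^ zq_dot u v * cnj (?\<omega> ^ zq_dot u w))" for u v w
  have swap: "(\<Sum>u\<in>?Z. \<Sum>v\<in>?Z. \<Sum>w\<in>?Z. F u v w) = (\<Sum>v\<in>?Z. \<Sum>w\<in>?Z. \<Sum>u\<in>?Z. F u v w)"
    by (subst sum.swap) (rule sum.cong[OF refl sum.swap])
  have inner: "(\<Sum>u\<in>?Z. F u v w) = (if v = w then \<psi> v * cnj (\<phi> v) * of_nat q ^ l else 0)"
    if "v \<in> ?Z" "w \<in> ?Z" for v w
    unfolding F_def sum_distrib_left[symmetric] sum_zqvecs_orthogonal[OF that] by simp
  have "(\<Sum>u\<in>?Z. qft q l \<psi> u * cnj (qft q l \<phi> u)) = of_real (1 / real q ^ l) * (\<Sum>u\<in>?Z. \<Sum>v\<in>?Z. \<Sum>w\<in>?Z. F u v w)"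
    by (simp add: qft_mult_cnj_qft F_def sum_distrib_left)
  also have "\<dots> = of_real (1 / real q ^ l) * (\<Sum>v\<in>?Z. \<Sum>w\<in>?Z. if v = w then \<psi> v * cnj (\<phi> v) * of_nat q ^ l else 0)"
    by (simp add: swap inner)
  also have "\<dots> = (\<Sum>v\<in>?Z. \<psi> v * cnj (\<phi> v))"
    using q by (simp add: finite_zqvecs sum_distrib_left)
  finally show ?thesis .
qed

lemma of_real_sqnorm: "complex_of_real (sqnorm q l \<psi>) = (\<Sum>v\<in>zqvecs q l. \<psi> v * cnj (\<psi> v))"
  by (simp only: sqnorm_def of_real_sum complex_norm_square)

corollary sqnorm_qft:
  assumes "0 < q"
  shows "sqnorm q l (qft q l \<psi>) = sqnorm q l \<psi>"
proof -
  have "complex_of_real (sqnorm q l (qft q l \<psi>)) = complex_of_real (sqnorm q l \<psi>)"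
    by (simp only: of_real_sqnorm qft_plancherel[OF assms])
  then show ?thesis
    by (simp only: of_real_eq_iff)
qed

section \<open>The honest run\<close>

lemma sum_subspace_character_eq_0:
  assumes q: "0 < q" and A: "is_subspace q l A" and u: "u \<in> zqvecs q l" "u \<notin> zq_dual q l A"
  shows "(\<Sum>v\<in>A. zq_omega q ^ zq_dot u v) = 0"
proof -
  let ?\<omega> = "zq_omega q"
  have AZ: "A \<subseteq> zqvecs q l"
    using A by (rule subspace_subset_zqvecs)
  obtain a where a: "a \<in> A" "\<not> q dvd zq_dot u a"
    using u by (auto simp: zq_dual_def dvd_eq_mod_eq_0)
  \<comment> \<open>Translation by \<open>a\<close> permutes \<open>A\<close> and multiplies the sum by \<open>\<omega> ^ (u \<cdot> a) \<noteq> 1\<close>.\<close>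
  define T where "T v = zq_add q v a" for v
  have inj: "inj_on T A"
  proof (rule inj_onI)
    fix v w assume "v \<in> A" "w \<in> A" "T v = T w"
    then show "v = w"
      using AZ a(1) zq_add_right_cancel[of v q l w a] by (auto simp: T_def zqvecs_def)
  qed
  have "T ` A \<subseteq> A"
    using A a(1) by (auto simp: is_subspace_def T_def)
  then have TA: "T ` A = A"
    using endo_inj_surj[OF finite_subspace[OF A] _ inj] by blast
  have shift: "?\<omega> ^ zq_dot u (T v) = ?\<omega> ^ zq_dot u a * ?\<omega> ^ zq_dot u v" if "v \<in> A" for v
  proof -
    have "length v = length a"
      using that a(1) AZ by (auto simp: zqvecs_def)
    then have "?\<omega> ^ zq_dot u (T v) = ?\<omega> ^ (zq_dot v u + zq_dot a u)"
      using zq_omega_pow_mod[OF q] zq_dot_zq_add_mod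
      by (metis T_def zq_dot_commute)
    then show ?thesis
      by (simp add: power_add zq_dot_commute mult.commute)
  qed
  let ?S = "\<Sum>v\<in>A. ?\<omega> ^ zq_dot u v"
  have "?S = (\<Sum>v\<in>A. ?\<omega> ^ zq_dot u (T v))"
    using sum.reindex[OF inj, of "\<lambda>v. ?\<omega> ^ zq_dot u v"] by (simp add: TA)
  also have "\<dots> = ?\<omega> ^ zq_dot u a * ?S"
    by (simp add: shift sum_distrib_left)
  finally have "(1 - ?\<omega> ^ zq_dot u a) * ?S = 0"
    by (simp add: algebra_simps)
  moreover have "?\<omega> ^ zq_dot u a \<noteq> 1"
    using a(2) zq_omega_pow_eq_1_iff[OF q] by simp
  ultimately show ?thesis
    by simp
qed

lemma sum_zqvecs_restrict_subspace:
  assumes "is_subspace q l A"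
  shows "(\<Sum>v\<in>zqvecs q l. if v \<in> A then f v else 0) = sum f A"
  using sum.inter_restrict[OF finite_zqvecs, where g=f and B=A, symmetric]
    Int_absorb1[OF subspace_subset_zqvecs[OF assms]] by simp

lemma sqnorm_subspace_state:
  assumes "is_subspace q l A"
  shows "sqnorm q l (subspace_state A) = 1"
proof -
  have "sqnorm q l (subspace_state A) = (\<Sum>v\<in>zqvecs q l. if v \<in> A then 1 / real (card A) else 0)"
    unfolding sqnorm_def by (rule sum.cong) (simp_all add: subspace_state_def norm_divide power_divide)
  also have "\<dots> = 1"
    using card_subspace_pos[OF assms] by (simp add: sum_zqvecs_restrict_subspace[OF assms])
  finally show ?thesis .
qed

lemma proj_ind_subspace_state:
  assumes "is_subspace q l A" "\<forall>v\<in>zqvecs q l. f v = (v \<in> A)"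
  shows "proj_ind f (subspace_state A) = subspace_state A"
  using assms subspace_subset_zqvecs[OF assms(1)]
  by (auto simp: proj_ind_def subspace_state_def fun_eq_iff)

lemma qft_subspace_state_eq_0:
  assumes q: "0 < q" and A: "is_subspace q l A" and u: "u \<notin> zq_dual q l A"
  shows "qft q l (subspace_state A) u = 0"
proof (cases "u \<in> zqvecs q l")
  case True
  define c where "c = complex_of_real (1 / sqrt (real (card A)))"
  have "(\<Sum>v\<in>zqvecs q l. zq_omega q ^ zq_dot u v * subspace_state A v)
      = (\<Sum>v\<in>zqvecs q l. if v \<in> A then zq_omega q ^ zq_dot u v * c else 0)"
    by (rule sum.cong) (simp_all add: subspace_state_def c_def)
  also have "\<dots> = (\<Sum>v\<in>A. zq_omega q ^ zq_dot u v) * c"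
    by (simp add: sum_zqvecs_restrict_subspace[OF A] sum_distrib_right)
  finally show ?thesis
    using sum_subspace_character_eq_0[OF q A True u] by (simp add: qft_def)
qed (simp add: qft_def)

lemma proj_ind_qft_subspace_state:
  assumes "0 < q" "is_subspace q l A" "\<forall>v\<in>zqvecs q l. h v = (v \<in> zq_dual q l A)"
  shows "proj_ind h (qft q l (subspace_state A)) = qft q l (subspace_state A)"
proof
  fix u
  show "proj_ind h (qft q l (subspace_state A)) u = qft q l (subspace_state A) u"
  proof (cases "u \<in> zq_dual q l A")
    case True
    then have "h u"
      using assms(3) by (auto simp: zq_dual_def)
    then show ?thesis
      by (simp add: proj_ind_def)
  next
    case False
    then show ?thesis
      using qft_subspace_state_eq_0[OF assms(1,2)] by (simp add: proj_ind_def)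
  qed
qed

lemma bernoulli_pmf_1: "bernoulli_pmf 1 = return_pmf True"
  by (rule pmf_eqI) (simp split: split_indicator)

lemma measure_ind_invariant_state:
  assumes "proj_ind f \<psi> = \<psi>" "sqnorm q l \<psi> = 1"
  shows "measure_ind q l f \<psi> = return_pmf (True, \<psi>)"
  using assms by (simp add: measure_ind_def bernoulli_pmf_1 normalize_state_def)

lemma ssl_run_subspace_state:
  assumes q: "0 < q l" and A: "is_subspace (q l) l A"
    and g: "\<forall>v\<in>zqvecs (q l) l. evalP g v = (v \<in> A)"
    and gp: "\<forall>v\<in>zqvecs (q l) l. evalP gp v = (v \<in> zq_dual (q l) l A)"
    and "Ver crs (g, gp, Ct) \<pi>"
  shows "ssl_run q evalP Eval Ver l crs (subspace_state A, g, gp, Ct, \<pi>) x =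
    return_pmf (Some ((qft (q l) l (qft (q l) l (subspace_state A)), g, gp, Ct, \<pi>), Eval Ct x))"
proof -
  have "measure_ind (q l) l (evalP g) (subspace_state A) = return_pmf (True, subspace_state A)"
    using proj_ind_subspace_state[OF A g] sqnorm_subspace_state[OF A]
    by (rule measure_ind_invariant_state)
  moreover have "measure_ind (q l) l (evalP gp) (qft (q l) l (subspace_state A))
      = return_pmf (True, qft (q l) l (subspace_state A))"
    using proj_ind_qft_subspace_state[OF q A gp] sqnorm_qft[OF q] sqnorm_subspace_state[OF A]
    by (intro measure_ind_invariant_state) simp_all
  ultimately show ?thesis
    using assms(5) by (simp add: ssl_run_def bind_return_pmf)
qed

section \<open>Probability bounds\<close>

lemma measure_pmf_prob_bind:
  "measure_pmf.prob (bind_pmf p f) E = (\<integral>x. measure_pmf.prob (f x) E \<partial>measure_pmf p)"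
  unfolding measure_pmf_bind
  by (rule measure_pmf.measure_bind[where N="count_space UNIV"]) (auto simp: measure_pmf_in_subprob_algebra)

lemma integrable_measure_pmf_prob: "integrable (measure_pmf p) (\<lambda>x. measure_pmf.prob (f x) E)"
  by (rule measure_pmf.integrable_const_bound[where B=1]) auto

lemma measure_pmf_prob_bind_ge:
  assumes "\<And>x. x \<in> set_pmf p \<Longrightarrow> e \<le> measure_pmf.prob (f x) E"
  shows "e \<le> measure_pmf.prob (bind_pmf p f) E"
  unfolding measure_pmf_prob_bind
  by (rule measure_pmf.integral_ge_const[OF integrable_measure_pmf_prob])
    (use assms in \<open>simp add: AE_measure_pmf_iff\<close>)

lemma measure_pmf_prob_bind_ge_except:
  assumes "e \<le> 1 - a - b" "measure_pmf.prob p B \<le> a" "0 \<le> b"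
    and "\<And>x. x \<in> set_pmf p \<Longrightarrow> x \<notin> B \<Longrightarrow> 1 - b \<le> measure_pmf.prob (f x) E"
  shows "e \<le> measure_pmf.prob (bind_pmf p f) E"
proof -
  have int_B: "integrable (measure_pmf p) (\<lambda>x. indicator B x :: real)"
    by (rule measure_pmf.integrable_const_bound[where B=1]) (auto simp: indicator_def)
  have "1 - b - measure_pmf.prob p B = (\<integral>x. 1 - b - indicator B x \<partial>measure_pmf p)"
    using int_B by (simp add: measure_pmf.emeasure_space_1 measure_pmf.prob_space)
  also have "\<dots> \<le> (\<integral>x. measure_pmf.prob (f x) E \<partial>measure_pmf p)"
  proof (rule integral_mono_AE)
    show "integrable (measure_pmf p) (\<lambda>x. 1 - b - indicator B x)"
      using int_B by simp
    show "AE x in measure_pmf p. 1 - b - indicator B x \<le> measure_pmf.prob (f x) E"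
      using assms(3,4) by (auto simp: AE_measure_pmf_iff indicator_def intro: order_trans[OF _ measure_nonneg])
  qed (rule integrable_measure_pmf_prob)
  finally show ?thesis
    using assms(1,2) unfolding measure_pmf_prob_bind by linarith
qed

lemma negligible_const_mult:
  assumes "negligible f"
  shows "negligible (\<lambda>l. k * f l)"
  unfolding negligible_def
proof
  fix c :: nat
  have "\<forall>\<^sub>F l in sequentially. \<bar>f l\<bar> \<le> inverse (real l ^ Suc c) \<and> \<bar>k\<bar> + 1 \<le> real l"
    using assms[unfolded negligible_def, rule_format, of "Suc c"]
      eventually_ge_at_top[of "nat \<lceil>\<bar>k\<bar> + 1\<rceil>"]
    by eventually_elim linarith
  then show "\<forall>\<^sub>F l in sequentially. \<bar>k * f l\<bar> \<le> inverse (real l ^ c)"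
  proof eventually_elim
    case (elim l)
    then have l: "0 < real l"
      by linarith
    have "\<bar>k * f l\<bar> \<le> real l * inverse (real l ^ Suc c)"
      unfolding abs_mult using elim by (intro mult_mono) auto
    also have "\<dots> = inverse (real l ^ c)"
      using l by (simp add: field_simps)
    finally show ?case .
  qed
qed

lemma set_pmf_ssl_gen:
  assumes "0 < q l"
  shows "set_pmf (ssl_gen q l crs) = subspaces_dim (q l) l (l div 2)"
proof -
  have "finite (subspaces_dim (q l) l (l div 2))"
    by (rule finite_subset[of _ "Pow (zqvecs (q l) l)"])
      (auto simp: subspaces_dim_def is_subspace_def finite_zqvecs)
  moreover have "subspaces_dim (q l) l (l div 2) \<noteq> {}"
    using ex_subspace_card[OF assms, of "l div 2" l] by (auto simp: subspaces_dim_def)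
  ultimately show ?thesis
    by (simp add: ssl_gen_def)
qed

locale ssl_ingredients =
  fixes q n :: "nat \<Rightarrow> nat"
    and Cls :: "nat \<Rightarrow> 'c set"
    and circ :: "'c \<Rightarrow> bool list \<Rightarrow> bool"
    and S :: "'c \<Rightarrow> bool list pmf"
    and Obf :: "nat \<Rightarrow> 'c \<Rightarrow> 'ro \<Rightarrow> 'o" and ro_dist :: "nat \<Rightarrow> 'ro pmf"
    and Eval :: "'o \<Rightarrow> bool list \<Rightarrow> bool"
    and shO :: "nat \<Rightarrow> nat list set \<Rightarrow> 'rs \<Rightarrow> 'p" and rs_dist :: "nat \<Rightarrow> 'rs pmf"
    and evalP :: "'p \<Rightarrow> nat list \<Rightarrow> bool"
    and CRSGen :: "nat \<Rightarrow> 'crs pmf"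
    and Prov :: "'crs \<Rightarrow> ('p \<times> 'p \<times> 'o) \<Rightarrow> (nat list set \<times> 'ro \<times> 'rs \<times> 'rs \<times> 'c \<times> bool list) \<Rightarrow> 'pf pmf"
    and Ver :: "'crs \<Rightarrow> ('p \<times> 'p \<times> 'o) \<Rightarrow> 'pf \<Rightarrow> bool"
    and \<mu> :: "nat \<Rightarrow> real"
  assumes q_pos: "0 < q l"
    and searchable: "C \<in> Cls l \<Longrightarrow> x \<in> set_pmf (S C) \<Longrightarrow> circ C x"
    and Obf_correct: "C \<in> Cls l \<Longrightarrow> r \<in> set_pmf (ro_dist l) \<Longrightarrow> length x = n l \<Longrightarrow> Eval (Obf l C r) x = circ C x"
    and shO_error: "is_subspace (q l) l A \<Longrightarrow>
      measure_pmf.prob (rs_dist l) {r. \<exists>v\<in>zqvecs (q l) l. evalP (shO l A r) v \<noteq> (v \<in> A)} \<le> \<mu> l"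
    and NIZK_complete: "crs \<in> set_pmf (CRSGen (l + n l)) \<Longrightarrow> ssl_rel q shO Obf circ l st w \<Longrightarrow>
      \<pi> \<in> set_pmf (Prov crs st w) \<Longrightarrow> Ver crs st \<pi>"
begin

definition shO_failures :: "nat \<Rightarrow> nat list set \<Rightarrow> 'rs set" where
  "shO_failures l A = {r. \<exists>v\<in>zqvecs (q l) l. evalP (shO l A r) v \<noteq> (v \<in> A)}"

definition run_correct :: "nat \<Rightarrow> 'c \<Rightarrow> ('crs \<times> nat list set \<times> (qstate \<times> 'p \<times> 'p \<times> 'o \<times> 'pf)) set" where
  "run_correct l C = {(crs, A, lease). \<forall>x. length x = n l \<longrightarrow>
     (\<forall>out\<in>set_pmf (ssl_run q evalP Eval Ver l crs lease x). map_option snd out = Some (circ C x))}"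

lemma \<mu>_nonneg: "0 \<le> \<mu> l"
proof -
  obtain A where "is_subspace (q l) l A"
    using ex_subspace_card[OF q_pos, of 0 l] by auto
  then show ?thesis
    using shO_error order_trans[OF measure_nonneg] by blast
qed

lemma honest_lease_run_correct:
  assumes C: "C \<in> Cls l" and crs: "crs \<in> set_pmf (CRSGen (l + n l))" and A: "is_subspace (q l) l A"
    and ro: "ro \<in> set_pmf (ro_dist l)"
    and rA: "rA \<notin> shO_failures l A" and rAp: "rAp \<notin> shO_failures l (zq_dual (q l) l A)"
    and x: "x \<in> set_pmf (S C)"
    and \<pi>: "\<pi> \<in> set_pmf (Prov crs (shO l A rA, shO l (zq_dual (q l) l A) rAp, Obf l C ro) (A, ro, rA, rAp, C, x))"
  shows "(crs, A, subspace_state A, shO l A rA, shO l (zq_dual (q l) l A) rAp, Obf l C ro, \<pi>) \<in> run_correct l C"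
proof -
  have "ssl_rel q shO Obf circ l (shO l A rA, shO l (zq_dual (q l) l A) rAp, Obf l C ro) (A, ro, rA, rAp, C, x)"
    using searchable[OF C x] by (simp add: ssl_rel_def)
  then have "Ver crs (shO l A rA, shO l (zq_dual (q l) l A) rAp, Obf l C ro) \<pi>"
    using NIZK_complete crs \<pi> by blast
  moreover have "\<forall>v\<in>zqvecs (q l) l. evalP (shO l A rA) v = (v \<in> A)"
    and "\<forall>v\<in>zqvecs (q l) l. evalP (shO l (zq_dual (q l) l A) rAp) v = (v \<in> zq_dual (q l) l A)"
    using rA rAp by (auto simp: shO_failures_def)
  ultimately have "set_pmf (ssl_run q evalP Eval Ver l crs
      (subspace_state A, shO l A rA, shO l (zq_dual (q l) l A) rAp, Obf l C ro, \<pi>) y)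
      = {Some ((qft (q l) l (qft (q l) l (subspace_state A)), shO l A rA, shO l (zq_dual (q l) l A) rAp,
          Obf l C ro, \<pi>), Eval (Obf l C ro) y)}" for y
    by (simp add: ssl_run_subspace_state[where q=q and l=l, OF q_pos A])
  then show ?thesis
    using Obf_correct[OF C ro] by (simp add: run_correct_def)
qed

lemma ssl_lessor_run_correct:
  assumes C: "C \<in> Cls l" and crs: "crs \<in> set_pmf (CRSGen (l + n l))" and A: "is_subspace (q l) l A"
  shows "1 - 2 * \<mu> l \<le> measure_pmf.prob
    (ssl_lessor q shO rs_dist Obf ro_dist S Prov l crs A C \<bind> (\<lambda>lease. return_pmf (crs, A, lease)))
    (run_correct l C)"
proof -
  have failures_A: "measure_pmf.prob (rs_dist l) (shO_failures l A) \<le> \<mu> l"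
    and failures_dual: "measure_pmf.prob (rs_dist l) (shO_failures l (zq_dual (q l) l A)) \<le> \<mu> l"
    using shO_error A is_subspace_zq_dual[OF q_pos] by (simp_all add: shO_failures_def)
  show ?thesis
    unfolding ssl_lessor_def bind_assoc_pmf bind_return_pmf
    apply (rule measure_pmf_prob_bind_ge)
    apply (rule measure_pmf_prob_bind_ge_except[OF _ failures_A \<mu>_nonneg[of l]])
     apply simp
    apply (rule measure_pmf_prob_bind_ge_except[OF _ failures_dual order_refl])
     apply simp
    apply (intro measure_pmf_prob_bind_ge)
    apply (simp add: measure_return honest_lease_run_correct[OF C crs A])
    done
qed

lemma ssl_exp_run_correct:
  assumes "C \<in> Cls l"
  shows "1 - 2 * \<mu> l \<le> measure_pmf.prob (ssl_exp q n CRSGen shO rs_dist Obf ro_dist S Prov l C) (run_correct l C)"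
  unfolding ssl_exp_def
  by (rule measure_pmf_prob_bind_ge, rule measure_pmf_prob_bind_ge)
    (simp add: ssl_lessor_run_correct[OF assms] set_pmf_ssl_gen[where q=q and l=l, OF q_pos] subspaces_dim_def)

end

lemma ssl_exp_check:
  assumes "0 < q l"
  shows "measure_pmf.prob (ssl_exp q n CRSGen shO rs_dist Obf ro_dist S Prov l C \<bind>
    (\<lambda>(crs, A, lease). ssl_check q l A lease)) {True} = 1"
proof -
  have check: "ssl_check q l A (subspace_state A, lease) = return_pmf True" if "is_subspace (q l) l A" for A lease
  proof -
    have "(\<Sum>v\<in>zqvecs (q l) l. cnj (subspace_state A v) * subspace_state A v) = 1"
      using of_real_sqnorm[of "q l" l "subspace_state A"] sqnorm_subspace_state[OF that]
      by (simp add: mult.commute)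
    then show ?thesis
      by (simp add: ssl_check_def bernoulli_pmf_1)
  qed
  show ?thesis
    by (subst measure_pmf.prob_eq_1)
      (auto simp: AE_measure_pmf_iff ssl_exp_def ssl_lessor_def set_pmf_ssl_gen[where q=q and l=l, OF assms]
        subspaces_dim_def check)
qed

theorem lemma54:
  fixes q n :: "nat \<Rightarrow> nat"
    and Cls :: "nat \<Rightarrow> 'c set"
    and circ :: "'c \<Rightarrow> bool list \<Rightarrow> bool"
    and S :: "'c \<Rightarrow> bool list pmf"
    and Obf :: "nat \<Rightarrow> 'c \<Rightarrow> 'ro \<Rightarrow> 'o" and ro_dist :: "nat \<Rightarrow> 'ro pmf"
    and Eval :: "'o \<Rightarrow> bool list \<Rightarrow> bool"
    and shO :: "nat \<Rightarrow> nat list set \<Rightarrow> 'rs \<Rightarrow> 'p" and rs_dist :: "nat \<Rightarrow> 'rs pmf"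
    and evalP :: "'p \<Rightarrow> nat list \<Rightarrow> bool"
    and CRSGen :: "nat \<Rightarrow> 'crs pmf"
    and Prov :: "'crs \<Rightarrow> ('p \<times> 'p \<times> 'o) \<Rightarrow> (nat list set \<times> 'ro \<times> 'rs \<times> 'rs \<times> 'c \<times> bool list) \<Rightarrow> 'pf pmf"
    and Ver :: "'crs \<Rightarrow> ('p \<times> 'p \<times> 'o) \<Rightarrow> 'pf \<Rightarrow> bool"
  assumes q_prime: "\<forall>l. prime (q l)"
    and searchable: "\<forall>l. \<forall>C\<in>Cls l. \<forall>x\<in>set_pmf (S C). length x = n l \<and> circ C x"
    and qIHO_perfectly_correct:
      "\<forall>l. \<forall>C\<in>Cls l. \<forall>r\<in>set_pmf (ro_dist l). \<forall>x. length x = n l \<longrightarrow> Eval (Obf l C r) x = circ C x"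
    and shO_correct:
      "\<exists>\<mu>. negligible \<mu> \<and> (\<forall>l A. is_subspace (q l) l A \<longrightarrow>
          measure_pmf.prob (rs_dist l) {r. \<exists>v\<in>zqvecs (q l) l. evalP (shO l A r) v \<noteq> (v \<in> A)} \<le> \<mu> l)"
    and NIZK_perfect_completeness:
      "\<forall>l. \<forall>crs\<in>set_pmf (CRSGen (l + n l)). \<forall>st w. ssl_rel q shO Obf circ l st w \<longrightarrow>
          (\<forall>\<pi>\<in>set_pmf (Prov crs st w). Ver crs st \<pi>)"
  shows "\<exists>\<epsilon>. negligible \<epsilon> \<and> (\<forall>l. \<forall>C\<in>Cls l.
     measure_pmf.prob (ssl_exp q n CRSGen shO rs_dist Obf ro_dist S Prov l C)
       {(crs, A, lease). \<forall>x. length x = n l \<longrightarrow>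
          (\<forall>out\<in>set_pmf (ssl_run q evalP Eval Ver l crs lease x). map_option snd out = Some (circ C x))}
       \<ge> 1 - \<epsilon> l
   \<and> measure_pmf.prob (ssl_exp q n CRSGen shO rs_dist Obf ro_dist S Prov l C \<bind>
         (\<lambda>(crs, A, lease). ssl_check q l A lease)) {True}
       \<ge> 1 - \<epsilon> l)"
proof -
  obtain \<mu> where negl: "negligible \<mu>" and shO_error: "\<forall>l A. is_subspace (q l) l A \<longrightarrow>
      measure_pmf.prob (rs_dist l) {r. \<exists>v\<in>zqvecs (q l) l. evalP (shO l A r) v \<noteq> (v \<in> A)} \<le> \<mu> l"
    using shO_correct by blast
  interpret ssl_ingredients q n Cls circ S Obf ro_dist Eval shO rs_dist evalP CRSGen Prov Ver \<mu>
    using prime_gt_0_nat[OF q_prime[rule_format]] searchable qIHO_perfectly_correct shO_error NIZK_perfect_completeness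
    by unfold_locales blast+
  show ?thesis
  proof (intro exI[of _ "\<lambda>l. 2 * \<mu> l"] conjI allI ballI)
    show "negligible (\<lambda>l. 2 * \<mu> l)"
      using negl by (rule negligible_const_mult)
  next
    fix l C assume "C \<in> Cls l"
    then show "1 - 2 * \<mu> l \<le> measure_pmf.prob (ssl_exp q n CRSGen shO rs_dist Obf ro_dist S Prov l C)
       {(crs, A, lease). \<forall>x. length x = n l \<longrightarrow>
          (\<forall>out\<in>set_pmf (ssl_run q evalP Eval Ver l crs lease x). map_option snd out = Some (circ C x))}"
      using ssl_exp_run_correct unfolding run_correct_def by blast
    show "1 - 2 * \<mu> l \<le> measure_pmf.prob (ssl_exp q n CRSGen shO rs_dist Obf ro_dist S Prov l C \<bind>
         (\<lambda>(crs, A, lease). ssl_check q l A lease)) {True}"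
      using \<mu>_nonneg[of l] by (simp add: ssl_exp_check[where q=q and l=l, OF q_pos])
  qed
qed

end
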